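(* Let $n\ge 2$, let $P\neq[n,n-1,\ldots,1]$ be an arithmetically progressed permutation with ratio $k$, and let $\mathsf{T}_P$ be its associated ternary string. If $\mathsf{T}_P$ contains exactly two distinct characters, then $\mathsf{BWT}_{\mathsf{T}_P}$ consists of exactly $2$ runs; if $\mathsf{T}_P$ contains exactly three distinct characters, then $\mathsf{BWT}_{\mathsf{T}_P}$ consists of exactly $3$ runs.
   Context: A run of a string is a maximal block of consecutive equal characters. Alphabet $\{\mathtt{a}<\mathtt{b}<\mathtt{c}\}$, lexicographic order with a proper prefix smaller than the longer string; suffix array $\mathsf{SA}_{\mathsf{T}}$: permutation of $[1..n]$ such that $\mathsf{T}[\mathsf{SA}_{\mathsf{T}}[i]..n]$ is the $i$-th smallest suffix. $x\bmod n$ denotes the representative of $x$ modulo $n$ in $[1..n]$. An arithmetically progressed permutation of length $n$ with ratio $k\in[1..n-1]$ is a permutation $P=[p_1,\ldots,p_n]$ of $[1..n]$ with $p_{i+1}=p_i+k\bmod n$. Ternary string associated with $P$: cut $P$ immediately after the entry $n-k$ and immediately after the entry $(p_1-k-1)\bmod n$, giving consecutive possibly empty blocks $A,B,C$ with $P=ABC$; set $\mathsf{T}_P[p_i]=\mathtt{a},\mathtt{b},\mathtt{c}$ according as $p_i$ lies in $A$, $B$, $C$. BWT: $\mathsf{BWT}_{\mathsf{T}}[i]=\mathsf{T}[\mathsf{SA}_{\mathsf{T}}[i]-1\bmod n]$. *)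

theory Defs
  imports Main "HOL-Library.Char_ord" "HOL-Library.List_Lexorder"
begin

definition modn :: "int \<Rightarrow> nat \<Rightarrow> int" where
  "modn x n = (x - 1) mod int n + 1"

text \<open>Arithmetically progressed permutation of length n with ratio k (lists are 0-indexed,
  entry p_i is P ! (i-1)).\<close>
definition ap_perm :: "nat \<Rightarrow> nat \<Rightarrow> nat list \<Rightarrow> bool" where
  "ap_perm n k P \<longleftrightarrow> length P = n \<and> distinct P \<and> set P = {1..n} \<and> 1 \<le> k \<and> k \<le> n - 1 \<and>
     (\<forall>i. i + 1 < n \<longrightarrow> int (P ! (i + 1)) = modn (int (P ! i) + int k) n)"

definition pos1 :: "nat list \<Rightarrow> nat \<Rightarrow> nat" where
  "pos1 P x = Suc (THE i. i < length P \<and> P ! i = x)"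

text \<open>Ternary string associated with P (as a list of length n, T[j] = list entry j-1).
  Cuts are made after the entries n-k and (p_1-k-1) mod n; A = P up to the first cut,
  B = between the cuts, C = the rest.\<close>
definition ternary :: "nat \<Rightarrow> nat list \<Rightarrow> char list" where
  "ternary k P = (let n = length P;
       c1 = pos1 P (n - k);
       c2 = pos1 P (nat (modn (int (P ! 0) - int k - 1) n));
       lo = min c1 c2; hi = max c1 c2
     in map (\<lambda>p. if p \<in> set (take lo P) then CHR ''a''
                 else if p \<in> set (take hi P) then CHR ''b'' else CHR ''c'') [1..<n+1])"

text \<open>Suffix array (1-based entries): positions sorted by their suffixes in lexicographic
  order (proper prefix smaller).\<close>
definition SA :: "char list \<Rightarrow> nat list" where
  "SA T = sort_key (\<lambda>i. drop (i - 1) T) [1..<length T + 1]"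

definition BWT :: "char list \<Rightarrow> char list" where
  "BWT T = map (\<lambda>i. T ! (nat (modn (int i - 1) (length T)) - 1)) (SA T)"

definition runs :: "'a list \<Rightarrow> nat" where
  "runs xs = length (remdups_adj xs)"

end

theory Submission
  imports Defs "HOL-Library.Multiset"
begin

text \<open>Read along P, the letters
  T[p_1], T[p_2], ..., T[p_n] form a sorted word a* b* c* with strict ascents right after the
  two cuts, and the suffix of T at p_(i+1) is the suffix at p_i shifted cyclically by k.
  Comparing these two suffixes character by character, each character weakly ascends, except
  where the shift passes the last entry p_n; but the position just before p_n in T holds the
  entry (p_1 - k - 1) mod n of the second cut, which ascends strictly. So the first difference
  is an ascent: when the shift does not wrap around, the first cut forces a difference, and
  otherwise the shorter suffix may also be a prefix of the longer one. Hence SA = P, and the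
  BWT, which lists the letter at p_i - 1 for each i, is the sorted word rotated to start just
  after the second cut. A sorted word rotated at a strict ascent has one run per letter.\<close>

lemma runs_sorted:
  fixes xs :: "'a::linorder list"
  assumes "sorted xs"
  shows "runs xs = card (set xs)"
proof -
  let ?ys = "remdups_adj xs"
  have "successively (\<le>) ?ys" "successively (\<noteq>) ?ys"
    using assms successively_if_sorted_wrt sorted_remdups_adj distinct_adj_remdups_adj
    by (auto simp: distinct_adj_def)
  then have "successively (<) ?ys"
    by (auto simp: successively_conv_nth order.strict_iff_order)
  then have "distinct ?ys"
    by (simp add: successively_conv_sorted_wrt strict_sorted_iff)
  then show ?thesis
    unfolding runs_def by (metis distinct_card remdups_adj_set)
qed



lemma runs_append:
  assumes "last xs \<noteq> hd ys"
  shows "runs (xs @ ys) = runs xs + runs ys"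
  using remdups_adj_append'[of xs ys] assms unfolding runs_def by (cases "xs = [] \<or> ys = []") auto

lemma runs_rotate_sorted:
  fixes xs :: "'a::linorder list"
  assumes "sorted xs" and "s \<le> length xs"
    and ascent: "0 < s \<Longrightarrow> s < length xs \<Longrightarrow> xs ! (s - 1) < xs ! s"
  shows "runs (rotate s xs) = card (set xs)"
proof (cases "0 < s \<and> s < length xs")
  case False
  then have "rotate s xs = xs"
    using assms(2) by (cases "s = 0") (auto simp: le_less)
  then show ?thesis using runs_sorted assms(1) by simp
next
  case True
  define ys zs where "ys = take s xs" and "zs = drop s xs"
  have rot: "rotate s xs = zs @ ys" using True by (simp add: rotate_drop_take ys_def zs_def)
  have sep: "y < z" if y: "y \<in> set ys" and z: "z \<in> set zs" for y z
  proof -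
    obtain i j where "i < s" "y = xs ! i" "j < length xs - s" "z = xs ! (s + j)"
      using y z True by (auto simp: ys_def zs_def in_set_conv_nth)
    then have "y \<le> xs ! (s - 1)" "xs ! s \<le> z"
      using assms(1) True by (auto intro!: sorted_nth_mono)
    then show ?thesis using ascent True by fastforce
  qed
  have "ys \<noteq> []" "zs \<noteq> []" using True by (auto simp: ys_def zs_def)
  then have "last zs \<noteq> hd ys" using sep[of "hd ys" "last zs"] by auto
  then have "runs (rotate s xs) = runs zs + runs ys" unfolding rot by (rule runs_append)
  also have "\<dots> = card (set zs) + card (set ys)"
    using assms(1) by (simp add: runs_sorted ys_def zs_def sorted_wrt_take sorted_wrt_drop)
  also have "\<dots> = card (set zs \<union> set ys)"
    using sep by (fastforce intro: card_Un_disjoint[symmetric])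
  also have "set zs \<union> set ys = set xs"
    unfolding ys_def zs_def by (metis Un_commute append_take_drop_id set_append)
  finally show ?thesis .
qed

lemma list_less_if_first_difference_less:
  fixes xs ys :: "'a::linorder list"
  assumes "\<And>t. t < length xs \<Longrightarrow> t < length ys \<Longrightarrow> take t xs = take t ys \<Longrightarrow> xs ! t \<le> ys ! t"
    and "length xs < length ys \<or> (\<exists>t < min (length xs) (length ys). xs ! t \<noteq> ys ! t)"
  shows "xs < ys"
  using assms
proof (induction xs arbitrary: ys)
  case Nil
  then show ?case by (cases ys) auto
next
  case (Cons x xs)
  then obtain y ys' where ys: "ys = y # ys'" by (cases ys) auto
  have "x \<le> y" using Cons.prems(1)[of 0] ys by simp
  show ?case
  proof (cases "x = y")
    case True
    have "xs < ys'"
    proof (rule Cons.IH)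
      show "xs ! t \<le> ys' ! t" if "t < length xs" "t < length ys'" "take t xs = take t ys'" for t
        using Cons.prems(1)[of "Suc t"] that True ys by simp
      show "length xs < length ys' \<or> (\<exists>t<min (length xs) (length ys'). xs ! t \<noteq> ys' ! t)"
        using Cons.prems(2) True ys by (auto simp: nth_Cons split: nat.splits)
    qed
    then show ?thesis using True ys by simp
  next
    case False
    then show ?thesis using \<open>x \<le> y\<close> ys by simp
  qed
qed

lemma nat_modn_eq_Suc:
  assumes "0 < n"
  shows "nat (modn x n) = Suc (nat ((x - 1) mod int n))"
  using assms unfolding modn_def by (simp add: nat_add_distrib)

locale ap_permutation =
  fixes n k :: nat and P :: "nat list"
  assumes n_ge_2: "n \<ge> 2" and ap: "ap_perm n k P"
begin

lemma length_P: "length P = n" and distinct_P: "distinct P" and set_P: "set P = {1..n}"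
  and k_less: "k < n"
  and P_step: "\<And>i. i + 1 < n \<Longrightarrow> int (P ! (i + 1)) = modn (int (P ! i) + int k) n"
  using ap n_ge_2 unfolding ap_perm_def by auto

text \<open>Positions in T are 0-based from here on: entry i = P ! i - 1 is the position of the
  (i+1)-th entry of P, and rank is the inverse of entry.\<close>

definition start :: nat where "start = P ! 0 - 1"

definition entry :: "nat \<Rightarrow> nat" where "entry i = (start + i * k) mod n"

lemma entry_less: "entry i < n"
  using n_ge_2 by (simp add: entry_def)

lemma int_entry: "int (entry i) = (int start + int i * int k) mod int n"
  by (simp add: entry_def zmod_int)

lemma entry_Suc: "entry (Suc i) = (entry i + k) mod n"
  by (simp add: entry_def mod_add_right_eq ac_simps)

lemma entry_mod: "entry (i mod n) = entry i"
proof -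
  have "(start + i mod n * k) mod n = (start + (i mod n * k) mod n) mod n"
    by (simp add: mod_add_right_eq)
  then show ?thesis
    by (simp add: entry_def mod_mult_left_eq mod_add_right_eq)
qed

lemma int_entry_add: "int (entry (i + j)) = (int (entry i) + int j * int k) mod int n"
  by (simp add: int_entry mod_add_right_eq algebra_simps)

lemma nth_P: "i < n \<Longrightarrow> P ! i = Suc (entry i)"
proof (induction i)
  case 0
  have "P ! 0 \<in> set P" using length_P n_ge_2 by simp
  then have "1 \<le> P ! 0" "P ! 0 \<le> n" using set_P by auto
  then show ?case by (simp add: entry_def start_def)
next
  case (Suc i)
  then have "int (P ! Suc i) = modn (1 + int (entry i) + int k) n"
    using P_step[of i] by simp
  also have "\<dots> = int (entry (Suc i)) + 1"
    by (simp add: modn_def entry_Suc zmod_int)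
  finally show ?case by simp
qed

definition rank :: "nat \<Rightarrow> nat" where "rank u = (THE i. i < n \<and> P ! i = Suc u)"

lemma rank_entry:
  assumes "i < n"
  shows "rank (entry i) = i"
proof -
  have "j = i" if "j < n" "P ! j = Suc (entry i)" for j
    using that assms nth_P distinct_P length_P by (metis nth_eq_iff_index_eq)
  then show ?thesis
    unfolding rank_def using assms nth_P by (intro the_equality) auto
qed

lemma entry_surj: "u < n \<Longrightarrow> \<exists>i<n. entry i = u"
proof -
  assume "u < n"
  then have "Suc u \<in> set P" using set_P by auto
  then obtain i where "i < n" "P ! i = Suc u" using length_P by (auto simp: in_set_conv_nth)
  then show ?thesis using nth_P by auto
qed

lemma
  assumes "u < n"
  shows rank_less: "rank u < n" and entry_rank: "entry (rank u) = u"
proof -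
  obtain i where "i < n" "entry i = u" using entry_surj assms by blast
  then show "rank u < n" "entry (rank u) = u" using rank_entry by auto
qed

lemma rank_successor:
  assumes "u < n" and "rank u \<noteq> n - 1"
  shows "rank ((u + k) mod n) = Suc (rank u)"
proof -
  have "Suc (rank u) < n" using assms rank_less by fastforce
  then have "rank (entry (Suc (rank u))) = Suc (rank u)" by (rule rank_entry)
  then show ?thesis using assms entry_rank by (simp add: entry_Suc)
qed

lemma pos1_P: "u < n \<Longrightarrow> pos1 P (Suc u) = Suc (rank u)"
  unfolding pos1_def rank_def length_P ..

lemma mem_take_P:
  assumes "u < n"
  shows "Suc u \<in> set (take m P) \<longleftrightarrow> rank u < m"
proof -
  have "Suc u \<in> set (take m P) \<longleftrightarrow> (\<exists>i. i < m \<and> i < n \<and> entry i = u)"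
    by (auto simp: in_set_conv_nth length_P nth_P)
  also have "\<dots> \<longleftrightarrow> rank u < m"
    using assms rank_entry rank_less entry_rank by auto
  finally show ?thesis .
qed

text \<open>The cuts, as 0-based indices in P of the entries n - k and (p_1 - k - 1) mod n.\<close>

definition cut1 :: nat where "cut1 = rank (n - k - 1)"

definition cut2 :: nat where "cut2 = rank (nat ((int start - int k - 1) mod int n))"

definition letter :: "nat \<Rightarrow> char" where
  "letter i = (if i \<le> min cut1 cut2 then CHR ''a'' else if i \<le> max cut1 cut2 then CHR ''b'' else CHR ''c'')"

lemma letter_mono: "i \<le> j \<Longrightarrow> letter i \<le> letter j"
  by (auto simp: letter_def less_eq_char_def)

lemma letter_ascent: "i = cut1 \<or> i = cut2 \<Longrightarrow> letter i < letter (Suc i)"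
  by (auto simp: letter_def less_char_def)

abbreviation T :: "char list" where "T \<equiv> ternary k P"

lemma length_T: "length T = n"
  by (simp add: ternary_def length_P Let_def)

lemma nth_T:
  assumes "u < n"
  shows "T ! u = letter (rank u)"
proof -
  have "n - k = Suc (n - k - 1)" using k_less by simp
  then have c1: "pos1 P (n - k) = Suc cut1" using pos1_P[of "n - k - 1"] by (simp add: cut1_def)
  have "int (P ! 0) - int k - 1 - 1 = int start - int k - 1"
    using nth_P[of 0] n_ge_2 by (simp add: start_def)
  then have c2: "pos1 P (nat (modn (int (P ! 0) - int k - 1) n)) = Suc cut2"
    using pos1_P n_ge_2 by (simp add: nat_modn_eq_Suc cut2_def nat_less_iff)
  have "T ! u = (if Suc u \<in> set (take (min (Suc cut1) (Suc cut2)) P) then CHR ''a''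
      else if Suc u \<in> set (take (max (Suc cut1) (Suc cut2)) P) then CHR ''b'' else CHR ''c'')"
    using assms by (simp add: ternary_def Let_def length_P c1 c2 del: upt_Suc)
  also have "\<dots> = letter (rank u)"
    using assms by (simp add: mem_take_P letter_def less_Suc_eq_le)
  finally show ?thesis .
qed

lemma rank_image: "rank ` {..<n} = {..<n}"
proof
  show "rank ` {..<n} \<subseteq> {..<n}" using rank_less by auto
  show "{..<n} \<subseteq> rank ` {..<n}"
  proof
    fix i assume "i \<in> {..<n}"
    then have "i = rank (entry i)" using rank_entry by simp
    then show "i \<in> rank ` {..<n}" using entry_less by blast
  qed
qed

lemma set_T: "set T = letter ` {..<n}"
proof -
  have "set T = (\<lambda>u. T ! u) ` {..<n}"
    by (auto simp: set_conv_nth length_T)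
  also have "\<dots> = letter ` rank ` {..<n}"
    by (auto simp: nth_T)
  finally show ?thesis by (simp only: rank_image)
qed

lemma T_le_successor:
  assumes "u < n" and "rank u \<noteq> n - 1"
  shows "T ! u \<le> T ! ((u + k) mod n)"
proof -
  have "(u + k) mod n < n" using n_ge_2 by simp
  then show ?thesis using assms by (simp add: nth_T rank_successor letter_mono)
qed

lemma T_less_successor:
  assumes "u < n" and "rank u \<noteq> n - 1" and "rank u = cut1 \<or> rank u = cut2"
  shows "T ! u < T ! ((u + k) mod n)"
proof -
  have "(u + k) mod n < n" using n_ge_2 by simp
  then show ?thesis using assms by (simp add: nth_T rank_successor letter_ascent)
qed

lemma int_entry_last: "int (entry (n - 1)) = (int start - int k) mod int n"
proof -
  have "int start + int (n - 1) * int k = int start - int k + int k * int n"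
    using n_ge_2 by (simp add: of_nat_diff algebra_simps)
  then show ?thesis unfolding int_entry by (simp only: mod_mult_self1)
qed

lemma cut2_less: "cut2 < n"
  unfolding cut2_def using n_ge_2 by (intro rank_less) (simp add: nat_less_iff)

lemma int_entry_cut2: "int (entry cut2) = (int start - int k - 1) mod int n"
  unfolding cut2_def using n_ge_2 by (subst entry_rank) (simp_all add: nat_less_iff)

lemma ascent_before_last_entry:
  assumes "0 < entry (n - 1)"
  shows "T ! (entry (n - 1) - 1) < T ! ((entry (n - 1) - 1 + k) mod n)"
proof -
  have "int (entry (n - 1) - 1) = (int (entry (n - 1)) - 1) mod int n"
    using assms entry_less[of "n - 1"] by simp
  also have "\<dots> = int (entry cut2)"
    using int_entry_last by (simp add: int_entry_cut2 mod_diff_left_eq)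
  finally have last: "entry (n - 1) - 1 = entry cut2" by simp
  then have "cut2 \<noteq> n - 1" using assms by auto
  then show ?thesis
    using T_less_successor[of "entry cut2"] last rank_entry[OF cut2_less] entry_less by simp
qed

text \<open>Below, b is the position after a in P, i.e. the next suffix in the claimed suffix order.\<close>

context
  fixes a b :: nat
  assumes a_less: "a < n" and rank_a: "rank a \<noteq> n - 1" and b_eq: "b = (a + k) mod n"
begin

lemma shift_successor: "b + t < n \<Longrightarrow> (a + t + k) mod n = b + t"
  using b_eq by (metis mod_add_left_eq mod_less add.commute add.left_commute)

lemma ascent_at_last_entry:
  assumes "a + t = entry (n - 1)" and "b + t < n"
  shows "0 < t \<and> T ! (a + (t - 1)) < T ! (b + (t - 1))"
proof -
  have "t \<noteq> 0"
  proof
    assume "t = 0"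
    then have "rank a = n - 1" using assms(1) rank_entry[of "n - 1"] n_ge_2 by simp
    with rank_a show False ..
  qed
  then show ?thesis
    using ascent_before_last_entry assms shift_successor[of "t - 1"] by simp
qed

lemma ascent_or_earlier_ascent:
  assumes "a + t < n" and "b + t < n"
  shows "T ! (a + t) \<le> T ! (b + t) \<or> (0 < t \<and> T ! (a + (t - 1)) < T ! (b + (t - 1)))"
proof (cases "rank (a + t) = n - 1")
  case True
  then have "a + t = entry (n - 1)" using entry_rank assms(1) by metis
  then show ?thesis using ascent_at_last_entry assms(2) by blast
next
  case False
  then show ?thesis using T_le_successor[OF assms(1) False] shift_successor assms(2) by simp
qed

lemma suffixes_differ:
  "length (drop a T) < length (drop b T) \<or>
   (\<exists>t < min (length (drop a T)) (length (drop b T)). drop a T ! t \<noteq> drop b T ! t)"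
proof (cases "b < a")
  case True
  then show ?thesis using a_less by (simp add: length_T diff_less_mono2)
next
  case False
  have "a + k < n"
  proof (rule ccontr)
    assume "\<not> a + k < n"
    then have "b = a + k - n" using b_eq a_less k_less by (simp add: le_mod_geq)
    then show False using False k_less \<open>\<not> a + k < n\<close> by arith
  qed
  then have b: "b = a + k" using b_eq by simp
  define t where "t = n - k - 1 - a"
  have t: "a + t = n - k - 1" "b + t < n" using \<open>a + k < n\<close> b by (simp_all add: t_def)
  have "\<exists>s \<le> t. T ! (a + s) \<noteq> T ! (b + s)"
  proof (cases "cut1 = n - 1")
    case True
    then have "a + t = entry (n - 1)" using t(1) entry_rank[of "n - k - 1"] n_ge_2 by (simp add: cut1_def)
    then have "T ! (a + (t - 1)) < T ! (b + (t - 1))" using ascent_at_last_entry t(2) by blast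
    then show ?thesis by (metis diff_le_self less_irrefl)
  next
    case False
    then have "T ! (a + t) < T ! (b + t)"
      using T_less_successor[of "a + t"] shift_successor[OF t(2)] t by (simp add: cut1_def)
    then show ?thesis by (metis order_refl less_irrefl)
  qed
  then obtain s where "s \<le> t" "T ! (a + s) \<noteq> T ! (b + s)" by blast
  then show ?thesis using t b by (intro disjI2 exI[of _ s]) (simp add: length_T)
qed

lemma suffix_less_successor: "drop a T < drop b T"
proof (rule list_less_if_first_difference_less)
  fix t
  assume t: "t < length (drop a T)" "t < length (drop b T)" "take t (drop a T) = take t (drop b T)"
  have earlier: "T ! (a + (t - 1)) = T ! (b + (t - 1))" if "0 < t"
  proof -
    have "drop a T ! (t - 1) = drop b T ! (t - 1)"
      using arg_cong[OF t(3), of "\<lambda>xs. xs ! (t - 1)"] that by simp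
    then show ?thesis using t by (simp add: length_T)
  qed
  have "a + t < n" "b + t < n" using t by (simp_all add: length_T)
  then have "T ! (a + t) \<le> T ! (b + t)"
    using ascent_or_earlier_ascent earlier by (metis less_irrefl)
  then show "drop a T ! t \<le> drop b T ! t" using t by (simp add: length_T)
qed (rule suffixes_differ)

end

lemma suffix_entry_less_successor: "Suc i < n \<Longrightarrow> drop (entry i) T < drop (entry (Suc i)) T"
  using suffix_less_successor[of "entry i"] entry_less rank_entry by (simp add: entry_Suc)

lemma SA_T: "SA T = P"
proof -
  have "SA T = sort_key (\<lambda>i. drop (i - 1) T) [1..<n + 1]" by (simp add: SA_def length_T)
  also have "\<dots> = P"
  proof (rule sort_key_inj_key_eq)
    show "mset [1..<n + 1] = mset P"
      using distinct_P set_P by (simp add: set_eq_iff_mset_eq_distinct[symmetric] atLeastAtMost_upt)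
    show "inj_on (\<lambda>i. drop (i - 1) T) (set [1..<n + 1])"
    proof (rule inj_onI)
      fix x y assume "x \<in> set [1..<n + 1]" "y \<in> set [1..<n + 1]" "drop (x - 1) T = drop (y - 1) T"
      then have "length (drop (x - 1) T) = length (drop (y - 1) T)" by (simp only:)
      with \<open>x \<in> _\<close> \<open>y \<in> _\<close> show "x = y" by (auto simp: length_T)
    qed
    show "sorted (map (\<lambda>i. drop (i - 1) T) P)"
      unfolding sorted_iff_nth_Suc
      using suffix_entry_less_successor by (simp add: length_P nth_P less_imp_le)
  qed
  finally show ?thesis .
qed

lemma BWT_index:
  assumes "j < n"
  shows "nat (modn (int (P ! j) - 1) n) - 1 = entry ((Suc cut2 + j) mod n)"
proof -
  have "int (entry ((Suc cut2 + j) mod n)) = (int (entry cut2) + int (Suc j) * int k) mod int n"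
    using entry_mod int_entry_add[of cut2 "Suc j"] by simp
  also have "\<dots> = (int start - int k - 1 + int (Suc j) * int k) mod int n"
    by (simp add: int_entry_cut2 mod_add_left_eq)
  also have "int start - int k - 1 + int (Suc j) * int k = int start + int j * int k - 1"
    by (simp add: algebra_simps)
  also have "(int start + int j * int k - 1) mod int n = (int (entry j) - 1) mod int n"
    by (simp add: int_entry mod_diff_left_eq)
  finally show ?thesis
    using assms n_ge_2 by (simp add: nth_P nat_modn_eq_Suc)
qed

lemma BWT_T: "BWT T = rotate (Suc cut2) (map letter [0..<n])"
proof (rule nth_equalityI)
  show "length (BWT T) = length (rotate (Suc cut2) (map letter [0..<n]))"
    by (simp add: BWT_def SA_T length_P)
  fix j assume "j < length (BWT T)"
  then have j: "j < n" by (simp add: BWT_def SA_T length_P)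
  then have "BWT T ! j = T ! (nat (modn (int (P ! j) - 1) n) - 1)"
    by (simp add: BWT_def SA_T length_T length_P)
  also have "\<dots> = T ! entry ((Suc cut2 + j) mod n)"
    by (simp only: BWT_index[OF j])
  also have "\<dots> = letter ((Suc cut2 + j) mod n)"
    using n_ge_2 by (simp add: nth_T entry_less rank_entry)
  also have "\<dots> = rotate (Suc cut2) (map letter [0..<n]) ! j"
    using j n_ge_2 by (simp only: nth_rotate length_map length_upt) simp
  finally show "BWT T ! j = rotate (Suc cut2) (map letter [0..<n]) ! j" .
qed

theorem runs_BWT_ternary: "runs (BWT T) = card (set T)"
proof -
  have "runs (BWT T) = card (set (map letter [0..<n]))"
    unfolding BWT_T
  proof (rule runs_rotate_sorted)
    show "sorted (map letter [0..<n])" by (simp add: sorted_iff_nth_mono letter_mono)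
    show "Suc cut2 \<le> length (map letter [0..<n])" using cut2_less by simp
    show "map letter [0..<n] ! (Suc cut2 - 1) < map letter [0..<n] ! Suc cut2"
      if "Suc cut2 < length (map letter [0..<n])"
      using that letter_ascent by simp
  qed
  then show ?thesis by (simp add: set_T atLeast0LessThan)
qed

end

theorem corollary6:
  fixes n k :: nat and P :: "nat list"
  assumes "n \<ge> 2" and "ap_perm n k P" and "P \<noteq> rev [1..<n+1]"
  shows "(card (set (ternary k P)) = 2 \<longrightarrow> runs (BWT (ternary k P)) = 2) \<and>
         (card (set (ternary k P)) = 3 \<longrightarrow> runs (BWT (ternary k P)) = 3)"
proof -
  interpret ap_permutation n k P using assms(1,2) by unfold_locales
  show ?thesis using runs_BWT_ternary by simp
qed

end
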